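(* Let $L$ be a positive integer, $S\ge 2$ an integer with $2^S\mid L$, and let $\{a_i(k)\}_{i\in\mathbb Z_L}$, $k\in\mathcal K=\mathbb Z_L$, be binary sequences (indexed by one period) satisfying: for every $s$ distinct keys $k_1,\ldots,k_S\in\mathcal K$ and all $b_1,\ldots,b_S\in\{0,1\}$, $$|A_{b_1\ldots b_S}(k_1,\ldots,k_S)|=L/2^S.$$ Let $0<\gamma<1$ with $\gamma L$ an integer, and let $2\le s\le S$. Let $r$ be the integer with $P_s(r)\le\gamma/2<P_s(r+1)$. Then for every set $T\subset\mathbb Z_L$ with $|T|=\gamma L$ and every guessing function $g:T\to\{0,1\}$, and for every $s$ distinct keys $k_1,\ldots,k_s\in\mathcal K$, $$\min_{1\le i\le s}\bigl|\{j\in T: g(j)=a_j(k_i)\}\bigr|\le n_{\rm correct}(\gamma):=L\Bigl\{P_{s-1}(r)+\frac{s-r-1}{s}\bigl(\gamma-2P_s(r)\bigr)\Bigr\}.$$ Equivalently, for every such $T$ and $g$, fewer than $s$ keys $k\in\mathcal K$ satisfy $|\{j\in T: g(j)=a_j(k)\}|>n_{\rm correct}(\gamma)$; in particular, if the key is uniformly distributed on $\mathcal K$, the number of correctly guessed bits does not exceed $n_{\rm correct}(\gamma)$ with probability at least $1-s/|\mathcal K|$.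
   Context: $\mathbb Z_L=\{0,\ldots,L-1\}$ is the residue ring modulo $L$. For distinct keys $k_1,\ldots,k_s$ and bits $b_1,\ldots,b_s$, $A_{b_1\ldots b_s}(k_1,\ldots,k_s)=\{i\in\mathbb Z_L: a_i(k_1)=b_1,\ldots,a_i(k_s)=b_s\}$. For integers $s\ge1$ and $t$, $P_s(t)=\Pr[X_s\le t]=2^{-s}\sum_{u=0}^{t}\binom{s}{u}$, where $X_s$ is binomial with $s$ trials and success probability $1/2$ (so $P_s(t)=0$ for $t<0$). *)

theory Defs
  imports Complex_Main
begin

text \<open>P_s(t) = Pr[X_s \<le> t] = 2^{-s} * sum_{u=0}^{t} (s choose u); equals 0 for t < 0.\<close>
definition Pbin :: "nat \<Rightarrow> int \<Rightarrow> real" where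
  "Pbin s t = (if t < 0 then 0 else (\<Sum>u\<le>nat t. real (s choose u)) / 2 ^ s)"

text \<open>A_{b_1..b_m}(k_1,..,k_m) for keys k 0..k (m-1), bits b 0..b (m-1);
  the sequences are a k i = a_i(k), with i ranging over Z_L = {0..<L}.\<close>
definition Aset :: "nat \<Rightarrow> (nat \<Rightarrow> nat \<Rightarrow> nat) \<Rightarrow> nat \<Rightarrow> (nat \<Rightarrow> nat) \<Rightarrow> (nat \<Rightarrow> nat) \<Rightarrow> nat set" where
  "Aset L a m k b = {i. i < L \<and> (\<forall>j<m. a (k j) i = b j)}"

definition ncorr :: "(nat \<Rightarrow> nat \<Rightarrow> nat) \<Rightarrow> nat set \<Rightarrow> (nat \<Rightarrow> nat) \<Rightarrow> nat \<Rightarrow> nat" where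
  "ncorr a T g k = card {j\<in>T. g j = a k j}"

end

theory Submission
  imports Defs
begin

text \<open>
  Fix \<open>s\<close> distinct keys. At a position where \<open>w\<close> of them have bit 1, the guess agrees with
  \<open>w\<close> or \<open>s - w\<close> of them, and \<open>max w (s - w) \<le> (s - r - 1) + h w\<close> for the nonnegative hinge
  \<open>h w = (r + 1 - w)\<^sup>+ + (w - (s - r - 1))\<^sup>+\<close>. Summing over \<open>T\<close>, and bounding the sum of \<open>h\<close>
  over \<open>T\<close> by its sum over all positions, the \<open>s\<close> keys together have at most
  \<open>\<gamma>L (s - r - 1) + \<Sum>\<^sub>j h w\<^sub>j\<close> correct guesses. Balancedness makes each of the \<open>2\<^sup>s\<close> bit patterns
  of the keys occur \<open>L / 2\<^sup>s\<close> times, so \<open>\<Sum>\<^sub>j h w\<^sub>j = L / 2\<^sup>s \<Sum>\<^sub>u (s choose u) h u\<close>, which the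
  absorption identity \<open>s (s - 1 choose u) = (s - u) (s choose u)\<close> evaluates in terms of
  \<open>P\<^sub>s(r)\<close> and \<open>P\<^sub>s\<^sub>-\<^sub>1(r)\<close>. The minimum is at most the average, and \<open>s\<close> keys above the bound
  would contradict it.
\<close>

lemma sum_Pow_lessThan_card:
  fixes h :: "nat \<Rightarrow> real"
  shows "(\<Sum>A\<in>Pow {..<s}. h (card A)) = (\<Sum>u\<le>s. real (s choose u) * h u)"
proof -
  have "(\<Sum>A\<in>Pow {..<s}. h (card A)) = (\<Sum>u\<le>s. \<Sum>A\<in>{A \<in> Pow {..<s}. card A = u}. h (card A))"
    by (rule sum.group[symmetric]) (auto dest: card_mono[rotated])
  also have "\<dots> = (\<Sum>u\<le>s. real (s choose u) * h u)"
  proof (rule sum.cong[OF refl])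
    fix u
    have "card {A \<in> Pow {..<s}. card A = u} = s choose u"
      using n_subsets[of "{..<s}" u] by simp
    then show "(\<Sum>A\<in>{A \<in> Pow {..<s}. card A = u}. h (card A)) = real (s choose u) * h u"
      by simp
  qed
  finally show ?thesis .
qed

lemma Pbin_ge_1:
  assumes "int s \<le> r"
  shows "1 \<le> Pbin s r"
proof -
  have "(2::real) ^ s = real (\<Sum>u\<le>s. s choose u)"
    by (simp only: choose_row_sum) simp
  also have "\<dots> = (\<Sum>u\<le>s. real (s choose u))"
    by simp
  also have "\<dots> \<le> (\<Sum>u\<le>nat r. real (s choose u))"
    using assms by (intro sum_mono2) auto
  finally show ?thesis
    using assms by (simp add: Pbin_def)
qed

lemma sum_binomial_ramp_reflect:
  fixes t s :: nat
  shows "(\<Sum>u\<le>s. real (s choose u) * max 0 (real u - (real s - real t - 1)))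
       = (\<Sum>u\<le>s. real (s choose u) * max 0 (real t + 1 - real u))"
proof -
  have "(\<Sum>u\<le>s. real (s choose u) * max 0 (real u - (real s - real t - 1)))
      = (\<Sum>u\<le>s. real (s choose (s - u)) * max 0 (real (s - u) - (real s - real t - 1)))"
    by (subst sum.atLeastAtMost_rev[of _ 0, simplified atLeast0AtMost]) simp
  also have "\<dots> = (\<Sum>u\<le>s. real (s choose u) * max 0 (real t + 1 - real u))"
    by (intro sum.cong refl) (auto simp: of_nat_diff binomial_symmetric[symmetric])
  finally show ?thesis .
qed

lemma sum_binomial_ramp:
  fixes t s :: nat
  assumes "t < s"
  shows "(\<Sum>u\<le>t. real (s choose u) * (real t + 1 - real u))
       = real s * (\<Sum>u\<le>t. real ((s - 1) choose u)) - (real s - real t - 1) * (\<Sum>u\<le>t. real (s choose u))"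
proof -
  have absorb: "real s * real ((s - 1) choose u) = (real s - real u) * real (s choose u)"
    if "u \<le> t" for u
  proof -
    have "real ((s - u) * (s choose u)) = real (s * ((s - 1) choose u))"
      by (simp only: binomial_absorb_comp)
    then show ?thesis using that assms by (simp add: of_nat_diff)
  qed
  have "real s * (\<Sum>u\<le>t. real ((s - 1) choose u)) - (real s - real t - 1) * (\<Sum>u\<le>t. real (s choose u))
      = (\<Sum>u\<le>t. real s * real ((s - 1) choose u) - (real s - real t - 1) * real (s choose u))"
    by (simp add: sum_distrib_left sum_subtractf)
  also have "\<dots> = (\<Sum>u\<le>t. real (s choose u) * (real t + 1 - real u))"
    using absorb by (intro sum.cong refl) (auto simp: algebra_simps)
  finally show ?thesis ..
qed

definition hinge :: "nat \<Rightarrow> int \<Rightarrow> nat \<Rightarrow> real" where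
  "hinge s r w = max 0 (real_of_int r + 1 - real w) + max 0 (real w - (real s - real_of_int r - 1))"

lemma hinge_nonneg: "0 \<le> hinge s r w"
  by (simp add: hinge_def)

lemma max_le_hinge: "max (real w) (real s - real w) \<le> (real s - real_of_int r - 1) + hinge s r w"
  by (auto simp: hinge_def)

lemma sum_binomial_hinge_Pbin:
  assumes "0 < s" "r < int s"
  shows "(\<Sum>u\<le>s. real (s choose u) * hinge s r u)
       = 2 ^ s * (real s * Pbin (s - 1) r - 2 * (real s - real_of_int r - 1) * Pbin s r)"
proof (cases "r < 0")
  case True
  then show ?thesis by (simp add: hinge_def Pbin_def)
next
  case False
  define t where "t = nat r"
  have r: "r = int t" "t < s" using False assms by (auto simp: t_def)
  have pow: "(2::real) ^ s = 2 * 2 ^ (s - 1)"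
    using \<open>0 < s\<close> by (simp flip: power_Suc)
  have "(\<Sum>u\<le>s. real (s choose u) * max 0 (real t + 1 - real u))
      = (\<Sum>u\<le>t. real (s choose u) * (real t + 1 - real u))"
    using r(2) by (intro sum.mono_neutral_cong_right) auto
  then have "(\<Sum>u\<le>s. real (s choose u) * hinge s r u)
      = 2 * (\<Sum>u\<le>t. real (s choose u) * (real t + 1 - real u))"
    using sum_binomial_ramp_reflect[of s t]
    by (simp add: hinge_def r(1) distrib_left sum.distrib)
  also have "\<dots> = 2 ^ s * (real s * Pbin (s - 1) r - 2 * (real s - real_of_int r - 1) * Pbin s r)"
    unfolding sum_binomial_ramp[OF r(2)] by (simp add: Pbin_def r(1) pow field_simps)
  finally show ?thesis .
qed

lemma inj_on_extend_lessThan: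
  fixes k :: "nat \<Rightarrow> nat"
  assumes "s \<le> S" "S \<le> L" and k: "\<forall>i<s. k i < L" "inj_on k {..<s}"
  obtains k' where "\<And>i. i < s \<Longrightarrow> k' i = k i" "\<forall>i<S. k' i < L" "inj_on k' {..<S}"
proof -
  have "card {s..<S} \<le> card ({..<L} - k ` {..<s})"
    using assms by (subst card_Diff_subset) (auto simp: card_image)
  then obtain f where f: "f ` {s..<S} \<subseteq> {..<L} - k ` {..<s}" "inj_on f {s..<S}"
    using card_le_inj[of "{s..<S}" "{..<L} - k ` {..<s}"] by auto
  define k' where "k' i = (if i < s then k i else f i)" for i
  have "{..<S} = {..<s} \<union> {s..<S}" using assms(1) by auto
  moreover have "inj_on k' {..<s}" "inj_on k' {s..<S}"
    using k(2) f(2) by (auto simp: k'_def inj_on_def)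
  moreover have "k' ` {..<s} \<inter> k' ` {s..<S} = {}"
    using f(1) by (auto simp: k'_def)
  ultimately have "inj_on k' {..<S}" by (auto simp: inj_on_Un)
  moreover have "\<forall>i<S. k' i < L" using k(1) f(1) by (force simp: k'_def)
  ultimately show thesis using that[of k'] by (simp add: k'_def)
qed

locale balanced_sequences =
  fixes L S :: nat and a :: "nat \<Rightarrow> nat \<Rightarrow> nat"
  assumes L_pos: "L > 0"
    and S_dvd: "2 ^ S dvd L"
    and a_bin: "\<And>k i. k < L \<Longrightarrow> i < L \<Longrightarrow> a k i \<in> {0, 1}"
    and balanced: "\<And>k b. \<forall>j<S. k j < L \<Longrightarrow> inj_on k {..<S} \<Longrightarrow> \<forall>j<S. b j \<in> {0, 1} \<Longrightarrow>
                    card (Aset L a S k b) = L div 2 ^ S"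
begin

definition ones :: "(nat \<Rightarrow> nat) \<Rightarrow> nat \<Rightarrow> nat \<Rightarrow> nat set" where
  "ones k m j = {i. i < m \<and> a (k i) j = 1}"

lemma ones_subset: "ones k m j \<subseteq> {..<m}"
  by (auto simp: ones_def)

lemma card_ones_eq_full:
  assumes k: "\<forall>i<S. k i < L" "inj_on k {..<S}" and C: "C \<subseteq> {..<S}"
  shows "card {j. j < L \<and> ones k S j = C} = L div 2 ^ S"
proof -
  define b where "b i = (if i \<in> C then 1 else 0 :: nat)" for i
  have bit: "a (k i) j = b i \<longleftrightarrow> (a (k i) j = 1 \<longleftrightarrow> i \<in> C)" if "i < S" "j < L" for i j
    using a_bin[of "k i" j] k(1) that by (auto simp: b_def)
  have "ones k S j = C \<longleftrightarrow> (\<forall>i<S. a (k i) j = 1 \<longleftrightarrow> i \<in> C)" for j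
    using C by (auto simp: ones_def)
  then have "Aset L a S k b = {j. j < L \<and> ones k S j = C}"
    using bit by (auto simp: Aset_def)
  moreover have "\<forall>i<S. b i \<in> {0, 1}" by (simp add: b_def)
  ultimately show ?thesis
    using balanced[OF k] by metis
qed

lemma S_le_L: "S \<le> L"
proof -
  have "S < 2 ^ S" by (rule less_exp)
  also have "\<dots> \<le> L" using S_dvd L_pos by (simp add: dvd_imp_le)
  finally show ?thesis by simp
qed

text \<open>Extend the \<open>s\<close> keys to \<open>S\<close> distinct keys: the pattern \<open>A\<close> of the first \<open>s\<close> keys is the
  disjoint union of the \<open>2\<^sup>S\<^sup>-\<^sup>s\<close> full patterns \<open>A \<union> B\<close>, \<open>B \<subseteq> {s..<S}\<close>.\<close>

lemma card_ones_eq: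
  assumes "s \<le> S" and k: "\<forall>i<s. k i < L" "inj_on k {..<s}" and A: "A \<subseteq> {..<s}"
  shows "card {j. j < L \<and> ones k s j = A} = L div 2 ^ s"
proof -
  obtain k' where k': "\<And>i. i < s \<Longrightarrow> k' i = k i" "\<forall>i<S. k' i < L" "inj_on k' {..<S}"
    using inj_on_extend_lessThan[OF \<open>s \<le> S\<close> S_le_L k] by blast
  have ones_k: "ones k s j = ones k' S j \<inter> {..<s}" for j
    using \<open>s \<le> S\<close> k'(1) by (auto simp: ones_def)
  have split_ones: "ones k' S j = (ones k' S j \<inter> {..<s}) \<union> (ones k' S j \<inter> {s..<S})" for j
    by (auto simp: ones_def)
  have restrict: "(A \<union> B) \<inter> {..<s} = A" "(A \<union> B) \<inter> {s..<S} = B" if "B \<subseteq> {s..<S}" for B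
    using A that by auto
  have "{j. j < L \<and> ones k s j = A} = (\<Union>B\<in>Pow {s..<S}. {j. j < L \<and> ones k' S j = A \<union> B})"
  proof (intro set_eqI iffI)
    fix j assume "j \<in> {j. j < L \<and> ones k s j = A}"
    then have "j < L" "ones k' S j = A \<union> (ones k' S j \<inter> {s..<S})"
      using split_ones[of j] by (auto simp: ones_k)
    then show "j \<in> (\<Union>B\<in>Pow {s..<S}. {j. j < L \<and> ones k' S j = A \<union> B})"
      by (intro UN_I[of "ones k' S j \<inter> {s..<S}"]) auto
  next
    fix j assume "j \<in> (\<Union>B\<in>Pow {s..<S}. {j. j < L \<and> ones k' S j = A \<union> B})"
    then obtain B where "B \<subseteq> {s..<S}" "j < L" "ones k' S j = A \<union> B" by blast
    then show "j \<in> {j. j < L \<and> ones k s j = A}"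
      using restrict(1) by (simp add: ones_k)
  qed
  also have "card \<dots> = (\<Sum>B\<in>Pow {s..<S}. card {j. j < L \<and> ones k' S j = A \<union> B})"
  proof (rule card_UN_disjoint)
    show "\<forall>B\<in>Pow {s..<S}. \<forall>B'\<in>Pow {s..<S}. B \<noteq> B' \<longrightarrow>
        {j. j < L \<and> ones k' S j = A \<union> B} \<inter> {j. j < L \<and> ones k' S j = A \<union> B'} = {}"
      using restrict(2) by blast
  qed auto
  also have "\<dots> = (\<Sum>B\<in>Pow {s..<S}. L div 2 ^ S)"
    using A \<open>s \<le> S\<close> by (intro sum.cong refl card_ones_eq_full[OF k'(2,3)]) auto
  also have "\<dots> = 2 ^ (S - s) * (L div 2 ^ S)"
    by (simp add: card_Pow)
  also have "\<dots> = L div 2 ^ s"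
  proof -
    obtain q where "L = 2 ^ S * q" using S_dvd by blast
    moreover have "(2::nat) ^ S = 2 ^ s * 2 ^ (S - s)"
      using \<open>s \<le> S\<close> by (simp flip: power_add)
    ultimately show ?thesis by simp
  qed
  finally show ?thesis .
qed

lemma sum_ones_card:
  assumes "s \<le> S" and k: "\<forall>i<s. k i < L" "inj_on k {..<s}"
  shows "(\<Sum>j<L. h (card (ones k s j))) = real L / 2 ^ s * (\<Sum>u\<le>s. real (s choose u) * h u)"
proof -
  have "(\<Sum>j<L. h (card (ones k s j)))
      = (\<Sum>A\<in>Pow {..<s}. \<Sum>j\<in>{j \<in> {..<L}. ones k s j = A}. h (card (ones k s j)))"
    by (rule sum.group[symmetric]) (auto simp: ones_def)
  also have "\<dots> = (\<Sum>A\<in>Pow {..<s}. real (L div 2 ^ s) * h (card A))"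
    using card_ones_eq[OF assms] by (intro sum.cong refl) auto
  also have "real (L div 2 ^ s) = real L / 2 ^ s"
  proof -
    have "(2::nat) ^ s dvd L"
      using \<open>s \<le> S\<close> S_dvd by (meson dvd_trans le_imp_power_dvd)
    then show ?thesis by (simp add: real_of_nat_div)
  qed
  also have "(\<Sum>A\<in>Pow {..<s}. real L / 2 ^ s * h (card A)) = real L / 2 ^ s * (\<Sum>A\<in>Pow {..<s}. h (card A))"
    by (simp add: sum_distrib_left)
  finally show ?thesis
    by (simp add: sum_Pow_lessThan_card)
qed

lemma agreements_le_hinge:
  assumes j: "j < L" and g: "g j \<in> {0, 1}" and k: "\<forall>i<s. k i < L"
  shows "real (card {i \<in> {..<s}. g j = a (k i) j})
    \<le> (real s - real_of_int r - 1) + hinge s r (card (ones k s j))"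
proof -
  have "real (card {i \<in> {..<s}. g j = a (k i) j})
      \<le> max (real (card (ones k s j))) (real s - real (card (ones k s j)))"
  proof (cases "g j = 1")
    case True
    then have "{i \<in> {..<s}. g j = a (k i) j} = ones k s j" by (auto simp: ones_def)
    then show ?thesis by simp
  next
    case False
    with g have "{i \<in> {..<s}. g j = a (k i) j} = {..<s} - ones k s j"
      using a_bin j k by (fastforce simp: ones_def)
    moreover have "card ({..<s} - ones k s j) = s - card (ones k s j)"
      using card_Diff_subset[OF finite_subset[OF ones_subset] ones_subset] by simp
    moreover have "card (ones k s j) \<le> s"
      using card_mono[OF _ ones_subset] by fastforce
    ultimately show ?thesis by (simp add: of_nat_diff)
  qed
  then show ?thesis
    using max_le_hinge by (rule order_trans)
qed

lemma min_ncorr_le: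
  assumes "0 < s" "s \<le> S" "r < int s"
    and T: "T \<subseteq> {..<L}" "\<forall>j\<in>T. g j \<in> {0, 1}"
    and k: "\<forall>i<s. k i < L" "inj_on k {..<s}"
  shows "real (MIN i\<in>{..<s}. ncorr a T g (k i))
    \<le> real L * Pbin (s - 1) r + (real s - real_of_int r - 1) / real s * (real (card T) - 2 * real L * Pbin s r)"
proof -
  define c where "c = real s - real_of_int r - 1"
  have "finite T" using T(1) finite_subset by blast
  have "real s * real (MIN i\<in>{..<s}. ncorr a T g (k i)) \<le> (\<Sum>i<s. real (ncorr a T g (k i)))"
    using sum_bounded_below[of "{..<s}" "real (MIN i\<in>{..<s}. ncorr a T g (k i))"] by simp
  also have "\<dots> = (\<Sum>j\<in>T. real (card {i \<in> {..<s}. g j = a (k i) j}))"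
  proof -
    have "(\<Sum>i<s. ncorr a T g (k i)) = (\<Sum>j\<in>T. card {i \<in> {..<s}. g j = a (k i) j})"
      unfolding ncorr_def by (rule sum_multicount_gen) (use \<open>finite T\<close> in auto)
    then show ?thesis by (simp flip: of_nat_sum)
  qed
  also have "\<dots> \<le> (\<Sum>j\<in>T. c + hinge s r (card (ones k s j)))"
    using T k(1) unfolding c_def by (intro sum_mono agreements_le_hinge) auto
  also have "\<dots> \<le> real (card T) * c + (\<Sum>j<L. hinge s r (card (ones k s j)))"
    using T(1) by (simp add: sum.distrib sum_mono2 hinge_nonneg)
  also have "(\<Sum>j<L. hinge s r (card (ones k s j))) = real L * (real s * Pbin (s - 1) r - 2 * c * Pbin s r)"
    unfolding sum_ones_card[OF \<open>s \<le> S\<close> k] sum_binomial_hinge_Pbin[OF \<open>0 < s\<close> \<open>r < int s\<close>] c_def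
    by simp
  also have "real (card T) * c + real L * (real s * Pbin (s - 1) r - 2 * c * Pbin s r)
      = real s * (real L * Pbin (s - 1) r + c / real s * (real (card T) - 2 * real L * Pbin s r))"
    using \<open>0 < s\<close> by (simp add: field_simps)
  finally show ?thesis
    using \<open>0 < s\<close> unfolding c_def by simp
qed

end

lemma card_exceeding_less:
  fixes f :: "nat \<Rightarrow> nat" and n :: real
  assumes "0 < s"
    and bound: "\<And>k. \<forall>i<s. k i < L \<Longrightarrow> inj_on k {..<s} \<Longrightarrow> real (MIN i\<in>{..<s}. f (k i)) \<le> n"
  shows "card {k. k < L \<and> n < real (f k)} < s"
proof (rule ccontr)
  assume "\<not> card {k. k < L \<and> n < real (f k)} < s"
  then obtain K where K: "K \<subseteq> {k. k < L \<and> n < real (f k)}" "card K = s" "finite K"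
    by (meson not_less obtain_subset_with_card_n)
  obtain e where "bij_betw e {0..<card K} K"
    using ex_bij_betw_nat_finite[OF K(3)] by blast
  then have e: "bij_betw e {..<s} K"
    using K(2) by (simp add: atLeast0LessThan)
  have e_K: "e i < L" "n < real (f (e i))" if "i < s" for i
    using bij_betw_apply[OF e] that K(1) by auto
  obtain i where "i < s" "(MIN i\<in>{..<s}. f (e i)) = f (e i)"
    using Min_in[of "(\<lambda>i. f (e i)) ` {..<s}"] \<open>0 < s\<close> by fastforce
  moreover have "real (MIN i\<in>{..<s}. f (e i)) \<le> n"
    using e_K(1) bij_betw_imp_inj_on[OF e] by (intro bound) auto
  ultimately show False
    using e_K(2) by fastforce
qed

theorem theorem1:
  fixes L S s :: nat and a :: "nat \<Rightarrow> nat \<Rightarrow> nat" and \<gamma> :: real and r :: int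
  assumes L_pos: "L > 0"
    and S_ge: "S \<ge> 2"
    and S_dvd: "2 ^ S dvd L"
    and a_bin: "\<forall>k<L. \<forall>i<L. a k i \<in> {0, 1}"
    and balanced: "\<forall>k b. (\<forall>j<S. k j < L) \<longrightarrow> inj_on k {..<S} \<longrightarrow> (\<forall>j<S. b j \<in> {0, 1}) \<longrightarrow>
                    card (Aset L a S k b) = L div 2 ^ S"
    and gamma: "0 < \<gamma>" "\<gamma> < 1"
    and gammaL_int: "\<gamma> * real L \<in> \<int>"
    and s_range: "2 \<le> s" "s \<le> S"
    and r_def: "Pbin s r \<le> \<gamma> / 2" "\<gamma> / 2 < Pbin s (r + 1)"
  shows "\<forall>T g. T \<subseteq> {..<L} \<longrightarrow> real (card T) = \<gamma> * real L \<longrightarrow> (\<forall>j\<in>T. g j \<in> {0, 1}) \<longrightarrow>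
           (\<forall>k. (\<forall>i<s. k i < L) \<longrightarrow> inj_on k {..<s} \<longrightarrow>
              real (MIN i\<in>{..<s}. ncorr a T g (k i))
                \<le> real L * (Pbin (s - 1) r + (real s - real_of_int r - 1) / real s * (\<gamma> - 2 * Pbin s r)))
           \<and> card {k. k < L \<and> real (ncorr a T g k)
                > real L * (Pbin (s - 1) r + (real s - real_of_int r - 1) / real s * (\<gamma> - 2 * Pbin s r))} < s"
proof (intro allI impI)
  interpret balanced_sequences L S a
    using L_pos S_dvd a_bin balanced by unfold_locales auto
  fix T :: "nat set" and g :: "nat \<Rightarrow> nat"
  assume T: "T \<subseteq> {..<L}" "real (card T) = \<gamma> * real L" "\<forall>j\<in>T. g j \<in> {0, 1}"
  let ?n = "real L * (Pbin (s - 1) r + (real s - real_of_int r - 1) / real s * (\<gamma> - 2 * Pbin s r))"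
  \<comment> \<open>Only \<open>P\<^sub>s(r) \<le> \<gamma>/2 < 1/2\<close>, i.e. \<open>r < s\<close>, is needed; the upper condition on \<open>r\<close> merely
     selects the \<open>r\<close> giving the smallest bound.\<close>
  have "r < int s"
    using Pbin_ge_1[of s r] r_def(1) gamma(2) by linarith
  have "real L * Pbin (s - 1) r + (real s - real_of_int r - 1) / real s * (real (card T) - 2 * real L * Pbin s r)
      = ?n"
    unfolding T(2) using s_range by (simp add: field_simps)
  then have bound: "real (MIN i\<in>{..<s}. ncorr a T g (k i)) \<le> ?n"
    if "\<forall>i<s. k i < L" "inj_on k {..<s}" for k
    using min_ncorr_le[of s r T g k] s_range \<open>r < int s\<close> T that by simp
  moreover have "card {k. k < L \<and> ?n < real (ncorr a T g k)} < s"
    using s_range bound by (intro card_exceeding_less) auto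
  ultimately show "(\<forall>k. (\<forall>i<s. k i < L) \<longrightarrow> inj_on k {..<s} \<longrightarrow> real (MIN i\<in>{..<s}. ncorr a T g (k i)) \<le> ?n)
    \<and> card {k. k < L \<and> real (ncorr a T g k) > ?n} < s"
    by blast
qed

end
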